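(* In the two-project discovery model described in the context, suppose the principal's payoff is $1$ if at least one project is approved (i.e., she proposes a nonempty set $S$ and it is approved) and $0$ otherwise, and suppose $\mu_1<\mu_2<0$. Then discovering the project $i$ satisfying $\sigma_i/\mu_i<\sigma_j/\mu_j$ (where $\{i,j\}=\{1,2\}$) is better than discovering project $j$, and discovering both project values is strictly better than discovering either project value individually.
   Context: Model. There are two projects $i\in\{1,2\}$. The agent's values $v=(v_1,v_2)\in\mathbb{R}^2$ are drawn from a common prior that is bivariate normal with means $\mu_1,\mu_2$, standard deviations $\sigma_1,\sigma_2>0$ and correlation $\rho\in(0,1)$. Timing: (1) the principal chooses which project values to publicly discover (project 1's value, project 2's value, or both); (2) the chosen values are publicly revealed and the agent forms a posterior by Bayes' rule; (3) knowing the revealed values, the principal proposes a subset $S\subseteq\{1,2\}$; (4) the agent approves iff $\sum_{i\in S}\mathbb{E}[v_i\mid\text{revealed information}]\ge 0$. The principal chooses the proposal to maximize her payoff given the revealed information, and one discovery rule is better than another if its ex-ante expected payoff is strictly higher. *)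

theory Defs
  imports "HOL-Probability.Probability"
begin

definition binorm_pdf :: "real \<Rightarrow> real \<Rightarrow> real \<Rightarrow> real \<Rightarrow> real \<Rightarrow> real \<times> real \<Rightarrow> real" where
  "binorm_pdf mu1 mu2 s1 s2 r p =
     (let x = fst p; y = snd p;
          q = ((x - mu1) / s1)\<^sup>2 - 2 * r * ((x - mu1) / s1) * ((y - mu2) / s2) + ((y - mu2) / s2)\<^sup>2
      in exp (- q / (2 * (1 - r\<^sup>2))) / (2 * pi * s1 * s2 * sqrt (1 - r\<^sup>2)))"

definition prior :: "real \<Rightarrow> real \<Rightarrow> real \<Rightarrow> real \<Rightarrow> real \<Rightarrow> (real \<times> real) measure" where
  "prior mu1 mu2 s1 s2 r = density lborel (\<lambda>p. ennreal (binorm_pdf mu1 mu2 s1 s2 r p))"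

datatype discovery = Disc1 | Disc2 | DiscBoth

text \<open>If only project 1's value x is revealed, the
  posterior density of v2 is proportional to the joint density at (x, y), so its mean is
  (\<integral> y f(x,y) dy) / (\<integral> f(x,y) dy); symmetrically for project 2.
  Projects are indexed by 1 and 2.\<close>

definition posterior_mean :: "real \<Rightarrow> real \<Rightarrow> real \<Rightarrow> real \<Rightarrow> real \<Rightarrow> discovery \<Rightarrow> real \<times> real \<Rightarrow> nat \<Rightarrow> real" where
  "posterior_mean mu1 mu2 s1 s2 r D v i =
     (let f = binorm_pdf mu1 mu2 s1 s2 r; x = fst v; y = snd v in
      case D of
        DiscBoth \<Rightarrow> (if i = 1 then x else y)
      | Disc1 \<Rightarrow> (if i = 1 then x
                 else (\<integral>t. t * f (x, t) \<partial>lborel) / (\<integral>t. f (x, t) \<partial>lborel))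
      | Disc2 \<Rightarrow> (if i = 2 then y
                 else (\<integral>t. t * f (t, y) \<partial>lborel) / (\<integral>t. f (t, y) \<partial>lborel)))"

definition approves :: "nat set \<Rightarrow> (nat \<Rightarrow> real) \<Rightarrow> bool" where
  "approves S m \<longleftrightarrow> (\<Sum>i\<in>S. m i) \<ge> 0"

definition approval_payoff :: "nat set \<Rightarrow> bool \<Rightarrow> real" where
  "approval_payoff S a = (if S \<noteq> {} \<and> a then 1 else 0)"

definition principal_value :: "(nat set \<Rightarrow> bool \<Rightarrow> real) \<Rightarrow> (nat \<Rightarrow> real) \<Rightarrow> real" where
  "principal_value u m = Max ((\<lambda>S. u S (approves S m)) ` Pow {1, 2})"

definition ex_ante_payoff :: "real \<Rightarrow> real \<Rightarrow> real \<Rightarrow> real \<Rightarrow> real \<Rightarrow> discovery \<Rightarrow> real" where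
  "ex_ante_payoff mu1 mu2 s1 s2 r D =
     (\<integral>v. principal_value approval_payoff (posterior_mean mu1 mu2 s1 s2 r D v)
        \<partial>(prior mu1 mu2 s1 s2 r))"

definition better :: "real \<Rightarrow> real \<Rightarrow> real \<Rightarrow> real \<Rightarrow> real \<Rightarrow> discovery \<Rightarrow> discovery \<Rightarrow> bool" where
  "better mu1 mu2 s1 s2 r D D' \<longleftrightarrow> ex_ante_payoff mu1 mu2 s1 s2 r D > ex_ante_payoff mu1 mu2 s1 s2 r D'"

end

theory Submission
  imports Defs
begin

text \<open>Once v1 is revealed, the agent's posterior mean of v2 is the regression value
  mu2 + r s2 / s1 (v1 - mu1), which vanishes at t = mu1 - mu2 s1 / (r s2). Since one approval
  suffices, discovering v1 wins iff v1 \<ge> min 0 t, so its ex-ante payoff is the standard normal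
  tail beyond min (-mu1/s1) (-mu2/(r s2)); symmetrically for v2, and comparing the two
  thresholds decides between the single discoveries.

  Discovering both wins iff v1 \<ge> 0 or v2 \<ge> 0. Compared with discovering v1, it gains the
  region {v1 < min 0 t, v2 \<ge> 0} and loses {min 0 t \<le> v1 < 0, v2 < 0}. The loss region is
  empty unless t < 0, and then the point reflection through (t, 0) maps it into the gain region
  without decreasing the prior density: it negates the conditional mean of v2 and does not
  move v1 away from mu1 < t. A box of positive probability in the gain region is missed by the
  reflection, which makes the comparison strict.\<close>

lemma measurable_fst_borel[measurable]:
  "fst \<in> borel_measurable (borel :: ('a::topological_space \<times> 'b::topological_space) measure)"
  by (intro borel_measurable_continuous_onI continuous_intros)

lemma measurable_snd_borel[measurable]:
  "snd \<in> borel_measurable (borel :: ('a::topological_space \<times> 'b::topological_space) measure)"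
  by (intro borel_measurable_continuous_onI continuous_intros)

lemma measurable_swap_borel[measurable]:
  "prod.swap \<in> borel_measurable (borel :: ('a::topological_space \<times> 'b::topological_space) measure)"
  by (intro borel_measurable_continuous_onI continuous_intros)

lemma distr_lborel_swap:
  "distr lborel borel prod.swap = (lborel :: ('a::euclidean_space \<times> 'b::euclidean_space) measure)"
proof -
  have "distr lborel borel prod.swap
      = distr (lborel \<Otimes>\<^sub>M lborel) (lborel \<Otimes>\<^sub>M lborel) (\<lambda>(x, y). (y, x))"
    by (intro distr_cong) (simp_all only: lborel_prod sets_lborel prod.swap_def split_beta)
  also have "\<dots> = lborel \<Otimes>\<^sub>M lborel"
    by (rule lborel_pair.distr_pair_swap[symmetric])
  also have "\<dots> = lborel"
    by (rule lborel_prod)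
  finally show ?thesis .
qed

lemma distr_lborel_reflect: "distr lborel borel ((-) c) = (lborel :: 'a::euclidean_space measure)"
  using lborel_affine[of "-1" c] by (simp add: density_1)

lemma emeasure_density_nonzero:
  assumes [measurable]: "f \<in> borel_measurable M" "A \<in> sets M"
    and pos: "\<And>x. x \<in> A \<Longrightarrow> 0 < f x" and nonzero: "emeasure M A \<noteq> 0"
  shows "emeasure (density M f) A \<noteq> 0"
proof
  assume "emeasure (density M f) A = 0"
  then have "A \<in> null_sets (density M f)"
    by (simp add: null_sets_def)
  then have "AE x in M. x \<in> A \<longrightarrow> f x = 0"
    by (simp add: null_sets_density_iff)
  then have "AE x in M. x \<notin> A"
    by eventually_elim (use pos in fastforce)
  then show False
    using nonzero by (simp add: AE_iff_null_sets[symmetric] null_sets_def)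
qed

lemma (in finite_measure) finite_measure_less_of_Diff:
  assumes "measure M (A - B) < measure M (B - A)" "A \<in> sets M" "B \<in> sets M"
  shows "measure M A < measure M B"
  using assms by (simp add: finite_measure_Diff' Int_commute)

lemma std_normal_tail_strict_antimono:
  assumes "z1 < z2"
  shows "measure std_normal_distribution {z2..} < measure std_normal_distribution {z1..}"
proof -
  interpret prob_space std_normal_distribution
    by (rule prob_space_normal_density) simp
  have "emeasure lborel {z1..<z2} \<noteq> 0"
    using assms by simp
  then have "emeasure std_normal_distribution {z1..<z2} \<noteq> 0"
    by (intro emeasure_density_nonzero) (auto simp: normal_density_pos)
  then have "0 < measure std_normal_distribution ({z1..} - {z2..})"
    by (simp add: emeasure_eq_measure zero_less_measure_iff atLeastLessThan_def Diff_eq)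
  moreover have "{z1..} \<inter> {z2..} = {z2..}"
    using assms by auto
  ultimately show ?thesis
    by (simp add: finite_measure_Diff')
qed

lemma normal_density_eq_exp_zscore:
  assumes "s > 0"
  shows "normal_density m s y = exp (- ((y - m) / s)\<^sup>2 / 2) / (sqrt (2 * pi) * s)"
  using assms by (simp add: normal_density_def real_sqrt_mult power_divide)

lemma binorm_pdf_factor:
  assumes s1: "s1 > 0" and s2: "s2 > 0" and r: "\<bar>r\<bar> < 1"
  shows "binorm_pdf mu1 mu2 s1 s2 r (x, y) =
    normal_density mu1 s1 x * normal_density (mu2 + r * s2 / s1 * (x - mu1)) (s2 * sqrt (1 - r\<^sup>2)) y"
proof -
  define u where "u = (x - mu1) / s1"
  define w where "w = (y - mu2) / s2"
  have r2: "0 < 1 - r\<^sup>2" using r by (simp add: abs_square_less_1)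
  have "((y - (mu2 + r * s2 / s1 * (x - mu1))) / (s2 * sqrt (1 - r\<^sup>2)))\<^sup>2
      = (w - r * u)\<^sup>2 / (1 - r\<^sup>2)"
    using s1 s2 r2 by (simp add: u_def w_def field_simps)
  then have "normal_density mu1 s1 x * normal_density (mu2 + r * s2 / s1 * (x - mu1)) (s2 * sqrt (1 - r\<^sup>2)) y
     = exp (- u\<^sup>2 / 2) * exp (- (w - r * u)\<^sup>2 / (1 - r\<^sup>2) / 2)
       / (2 * pi * s1 * s2 * sqrt (1 - r\<^sup>2))"
    using s1 s2 r2 by (simp add: normal_density_eq_exp_zscore u_def)
  also have "exp (- u\<^sup>2 / 2) * exp (- (w - r * u)\<^sup>2 / (1 - r\<^sup>2) / 2)
      = exp (- (u\<^sup>2 - 2 * r * u * w + w\<^sup>2) / (2 * (1 - r\<^sup>2)))"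
    using r2 by (simp add: exp_add[symmetric] field_simps power2_eq_square)
  finally show ?thesis unfolding binorm_pdf_def u_def w_def Let_def by simp
qed

lemma binorm_pdf_swap: "binorm_pdf mu1 mu2 s1 s2 r (x, y) = binorm_pdf mu2 mu1 s2 s1 r (y, x)"
proof -
  have "u\<^sup>2 - 2 * r * u * w + w\<^sup>2 = w\<^sup>2 - 2 * r * w * u + u\<^sup>2" for u w :: real
    by algebra
  from this[of "(x - mu1) / s1" "(y - mu2) / s2"] show ?thesis
    unfolding binorm_pdf_def Let_def by (simp only: fst_conv snd_conv mult_ac)
qed

lemma binorm_pdf_pos:
  assumes "s1 > 0" "s2 > 0" "\<bar>r\<bar> < 1"
  shows "0 < binorm_pdf mu1 mu2 s1 s2 r p"
  using binorm_pdf_factor[OF assms, of mu1 mu2 "fst p" "snd p"] assms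
  by (simp add: normal_density_pos abs_square_less_1)

lemma borel_measurable_binorm_pdf[measurable]: "binorm_pdf mu1 mu2 s1 s2 r \<in> borel_measurable borel"
  unfolding binorm_pdf_def Let_def by measurable

lemma binorm_pdf_le_reflect:
  assumes s1: "s1 > 0" and s2: "s2 > 0" and r: "0 < r" "r < 1" and mu2: "mu2 < 0"
    and t: "t = mu1 - mu2 * s1 / (r * s2)" and x: "t \<le> x"
  shows "binorm_pdf mu1 mu2 s1 s2 r (x, y) \<le> binorm_pdf mu1 mu2 s1 s2 r (2 * t - x, - y)"
proof -
  define k where "k = r * s2 / s1"
  define c where "c = s2 * sqrt (1 - r\<^sup>2)"
  have r': "\<bar>r\<bar> < 1"
    using r by simp
  have k: "k > 0"
    using s1 s2 r by (simp add: k_def)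
  have tk: "k * (t - mu1) = - mu2"
    using s1 s2 r by (simp add: t k_def field_simps)
  then have "mu1 < t"
    using k mu2 by (metis diff_gt_0_iff_gt neg_0_less_iff_less zero_less_mult_pos)
  then have "0 \<le> 4 * (x - t) * (t - mu1)"
    using x by simp
  moreover have "(x - mu1)\<^sup>2 - (2 * t - x - mu1)\<^sup>2 = 4 * (x - t) * (t - mu1)"
    by (simp add: power2_eq_square algebra_simps)
  ultimately have "(2 * t - x - mu1)\<^sup>2 \<le> (x - mu1)\<^sup>2"
    by linarith
  then have marginal: "normal_density mu1 s1 x \<le> normal_density mu1 s1 (2 * t - x)"
    unfolding normal_density_def using s1
    by (intro mult_left_mono exp_mono divide_right_mono) (auto simp: diff_le_eq)
  have conditional:
    "normal_density (mu2 + k * (2 * t - x - mu1)) c (- y) = normal_density (mu2 + k * (x - mu1)) c y"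
  proof -
    have reflected_mean: "mu2 + k * (2 * t - x - mu1) = - (mu2 + k * (x - mu1))"
      using tk by (simp add: algebra_simps)
    show ?thesis
      unfolding normal_density_def reflected_mean by (simp add: power2_commute algebra_simps)
  qed
  have "binorm_pdf mu1 mu2 s1 s2 r (x, y)
      = normal_density mu1 s1 x * normal_density (mu2 + k * (x - mu1)) c y"
    unfolding binorm_pdf_factor[OF s1 s2 r'] k_def c_def ..
  also have "\<dots> \<le> normal_density mu1 s1 (2 * t - x) * normal_density (mu2 + k * (x - mu1)) c y"
    by (intro mult_right_mono marginal) simp
  also have "\<dots> = binorm_pdf mu1 mu2 s1 s2 r (2 * t - x, - y)"
    unfolding binorm_pdf_factor[OF s1 s2 r'] k_def[symmetric] c_def[symmetric] conditional[symmetric]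
    by simp
  finally show ?thesis .
qed

lemma sets_prior[simp, measurable_cong]: "sets (prior mu1 mu2 s1 s2 r) = sets borel"
  by (simp add: prior_def)

lemma space_prior[simp]: "space (prior mu1 mu2 s1 s2 r) = UNIV"
  by (simp add: prior_def)

lemma emeasure_prior:
  "A \<in> sets borel \<Longrightarrow>
    emeasure (prior mu1 mu2 s1 s2 r) A
      = (\<integral>\<^sup>+p. ennreal (binorm_pdf mu1 mu2 s1 s2 r p) * indicator A p \<partial>lborel)"
  unfolding prior_def by (simp add: emeasure_density)

lemma emeasure_prior_fst:
  assumes s1: "s1 > 0" and s2: "s2 > 0" and r: "\<bar>r\<bar> < 1" and B[measurable]: "B \<in> sets borel"
  shows "emeasure (prior mu1 mu2 s1 s2 r) {p. fst p \<in> B}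
       = (\<integral>\<^sup>+x. ennreal (normal_density mu1 s1 x) * indicator B x \<partial>lborel)"
proof -
  let ?f = "\<lambda>p. ennreal (binorm_pdf mu1 mu2 s1 s2 r p) * indicator {p. fst p \<in> B} p"
  define m where "m x = mu2 + r * s2 / s1 * (x - mu1)" for x
  define c where "c = s2 * sqrt (1 - r\<^sup>2)"
  have c: "c > 0" using s2 r by (simp add: c_def abs_square_less_1)
  have "emeasure (prior mu1 mu2 s1 s2 r) {p. fst p \<in> B}
      = (\<integral>\<^sup>+p. ?f p \<partial>(lborel \<Otimes>\<^sub>M lborel))"
    by (simp add: emeasure_prior lborel_prod)
  also have "\<dots> = (\<integral>\<^sup>+x. \<integral>\<^sup>+y. ?f (x, y) \<partial>lborel \<partial>lborel)"
    by (rule lborel.nn_integral_fst[symmetric]) (simp add: lborel_prod)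
  also have "\<dots> = (\<integral>\<^sup>+x. \<integral>\<^sup>+y. (ennreal (normal_density mu1 s1 x) * indicator B x)
      * ennreal (normal_density (m x) c y) \<partial>lborel \<partial>lborel)"
    by (intro nn_integral_cong)
       (simp add: binorm_pdf_factor[OF s1 s2 r] m_def c_def ennreal_mult' mult_ac split: split_indicator)
  also have "\<dots> = (\<integral>\<^sup>+x. ennreal (normal_density mu1 s1 x) * indicator B x \<partial>lborel)"
    using c by (simp add: nn_integral_cmult nn_integral_eq_integral)
  finally show ?thesis .
qed

lemma distributed_prior_fst:
  assumes "s1 > 0" "s2 > 0" "\<bar>r\<bar> < 1"
  shows "distributed (prior mu1 mu2 s1 s2 r) lborel fst (normal_density mu1 s1)"
  unfolding distributed_def
proof (intro conjI measure_eqI)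
  fix B assume "B \<in> sets (distr (prior mu1 mu2 s1 s2 r) lborel fst)"
  then have [measurable]: "B \<in> sets borel" by simp
  show "emeasure (distr (prior mu1 mu2 s1 s2 r) lborel fst) B
      = emeasure (density lborel (normal_density mu1 s1)) B"
    by (simp add: emeasure_distr emeasure_density vimage_def emeasure_prior_fst[OF assms])
qed auto

lemma prob_space_prior:
  assumes "s1 > 0" "s2 > 0" "\<bar>r\<bar> < 1"
  shows "prob_space (prior mu1 mu2 s1 s2 r)"
  using distributed_prior_fst[OF assms, of mu1 mu2] prob_space_normal_density[OF \<open>s1 > 0\<close>]
  by (intro prob_space_distrD[of fst _ lborel]) (auto simp: distributed_def)

lemma prior_swap: "distr (prior mu1 mu2 s1 s2 r) borel prod.swap = prior mu2 mu1 s2 s1 r"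
proof -
  have "prior mu2 mu1 s2 s1 r = density (distr lborel borel prod.swap) (binorm_pdf mu2 mu1 s2 s1 r)"
    unfolding prior_def distr_lborel_swap ..
  also have "\<dots> = distr (prior mu1 mu2 s1 s2 r) borel prod.swap"
    unfolding prior_def by (subst density_distr) (auto simp: prod.swap_def binorm_pdf_swap[of mu2 mu1])
  finally show ?thesis ..
qed

lemma measure_prior_swap:
  assumes [measurable]: "A \<in> sets borel"
  shows "measure (prior mu1 mu2 s1 s2 r) A = measure (prior mu2 mu1 s2 s1 r) (prod.swap -` A)"
proof -
  have "measure (distr (prior mu1 mu2 s1 s2 r) borel prod.swap) (prod.swap -` A)
      = measure (prior mu1 mu2 s1 s2 r) A"
    by (subst measure_distr) (auto simp: vimage_def)
  then show ?thesis
    by (simp add: prior_swap)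
qed

lemma measure_prior_box_pos:
  assumes "s1 > 0" "s2 > 0" "\<bar>r\<bar> < 1" and "a1 < b1" "a2 < b2"
  shows "0 < measure (prior mu1 mu2 s1 s2 r) ({a1<..<b1} \<times> {a2<..<b2})"
proof -
  interpret prob_space "prior mu1 mu2 s1 s2 r"
    using assms(1-3) by (rule prob_space_prior)
  have [measurable]: "{a1<..<b1} \<times> {a2<..<b2} \<in> sets borel"
    by (intro borel_open open_Times) auto
  have "emeasure lborel ({a1<..<b1} \<times> {a2<..<b2}) \<noteq> 0"
    using assms by (simp add: lborel_prod[symmetric] lborel.emeasure_pair_measure_Times ennreal_mult'[symmetric])
  then have "emeasure (prior mu1 mu2 s1 s2 r) ({a1<..<b1} \<times> {a2<..<b2}) \<noteq> 0"
    unfolding prior_def using assms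
    by (intro emeasure_density_nonzero) (auto simp: binorm_pdf_pos)
  then show ?thesis
    by (simp add: emeasure_eq_measure zero_less_measure_iff)
qed

lemma measure_prior_fst_ge:
  assumes "s1 > 0" "s2 > 0" "\<bar>r\<bar> < 1"
  shows "measure (prior mu1 mu2 s1 s2 r) {p. c \<le> fst p}
       = measure std_normal_distribution {(c - mu1) / s1..}"
proof -
  interpret prob_space "prior mu1 mu2 s1 s2 r"
    using assms by (rule prob_space_prior)
  define Z where "Z = (\<lambda>p::real \<times> real. (fst p - mu1) / s1)"
  have "distributed (prior mu1 mu2 s1 s2 r) lborel Z std_normal_density"
    using distributed_prior_fst[OF assms, of mu1 mu2]
      normal_standard_normal_convert[OF \<open>s1 > 0\<close>, of fst mu1]
    by (simp add: Z_def)
  then have Z: "distr (prior mu1 mu2 s1 s2 r) lborel Z = std_normal_distribution"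
    "Z \<in> borel_measurable borel"
    by (auto simp: distributed_def)
  have "{p. c \<le> fst p} = Z -` {(c - mu1) / s1..}"
    using \<open>s1 > 0\<close> by (auto simp: Z_def divide_le_cancel)
  then have "measure (prior mu1 mu2 s1 s2 r) {p. c \<le> fst p}
      = measure (distr (prior mu1 mu2 s1 s2 r) lborel Z) {(c - mu1) / s1..}"
    using Z(2) by (subst measure_distr) auto
  then show ?thesis
    unfolding Z(1) .
qed

lemma measure_prior_fst_eq:
  assumes "s1 > 0" "s2 > 0" "\<bar>r\<bar> < 1"
  shows "measure (prior mu1 mu2 s1 s2 r) {p. fst p = c} = 0"
proof -
  have "measure (prior mu1 mu2 s1 s2 r) {p. fst p = c}
      = measure (distr (prior mu1 mu2 s1 s2 r) lborel fst) {c}"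
    by (subst measure_distr) (auto simp: vimage_def)
  also have "\<dots> = measure (density lborel (normal_density mu1 s1)) {c}"
    using distributed_prior_fst[OF assms, of mu1 mu2] by (simp add: distributed_def)
  also have "\<dots> = 0"
  proof -
    have "AE x in density lborel (normal_density mu1 s1). x \<notin> {c}"
      using AE_lborel_singleton[of c] by (subst AE_density) auto
    then show ?thesis
      by (subst (asm) AE_iff_null_sets[symmetric]) (auto simp: null_sets_def measure_def)
  qed
  finally show ?thesis .
qed

lemma measure_prior_le_reflect:
  assumes "s1 > 0" "s2 > 0" "0 < r" "r < 1" "mu2 < 0"
    and t: "t = mu1 - mu2 * s1 / (r * s2)"
    and S[measurable]: "S \<in> sets borel" and S_right: "S \<subseteq> {p. t \<le> fst p}"
  shows "measure (prior mu1 mu2 s1 s2 r) S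
       \<le> measure (prior mu1 mu2 s1 s2 r) {q. (2 * t, 0) - q \<in> S}"
proof -
  interpret prob_space "prior mu1 mu2 s1 s2 r"
    using assms by (intro prob_space_prior) auto
  let ?f = "binorm_pdf mu1 mu2 s1 s2 r" and ?c = "(2 * t, 0::real)"
  have [measurable]: "{q. ?c - q \<in> S} \<in> sets borel"
    by measurable
  have "emeasure (prior mu1 mu2 s1 s2 r) S = (\<integral>\<^sup>+p. ennreal (?f p) * indicator S p \<partial>lborel)"
    by (simp add: emeasure_prior)
  also have "\<dots> \<le> (\<integral>\<^sup>+p. ennreal (?f (?c - p)) * indicator S p \<partial>lborel)"
  proof (intro nn_integral_mono)
    fix p :: "real \<times> real"
    have "?f p \<le> ?f (?c - p)" if "p \<in> S"
      using binorm_pdf_le_reflect[OF assms(1-6), of "fst p" "snd p"] S_right that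
      by (auto simp: minus_prod_def)
    then show "ennreal (?f p) * indicator S p \<le> ennreal (?f (?c - p)) * indicator S p"
      by (simp add: ennreal_leI split: split_indicator)
  qed
  also have "\<dots>
      = (\<integral>\<^sup>+q. ennreal (?f q) * indicator S (?c - q) \<partial>distr lborel borel ((-) ?c))"
    by (subst nn_integral_distr) auto
  also have "\<dots> = (\<integral>\<^sup>+q. ennreal (?f q) * indicator S (?c - q) \<partial>lborel)"
    unfolding distr_lborel_reflect ..
  also have "\<dots> = emeasure (prior mu1 mu2 s1 s2 r) {q. ?c - q \<in> S}"
    by (simp add: emeasure_prior indicator_def)
  finally show ?thesis
    by (simp add: emeasure_eq_measure)
qed

lemma measure_prior_lower_strip_le_upper_strip:
  assumes "s1 > 0" "s2 > 0" "0 < r" "r < 1" "mu2 < 0"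
    and \<tau>: "\<tau> = min 0 (mu1 - mu2 * s1 / (r * s2))"
  shows "measure (prior mu1 mu2 s1 s2 r) {p. \<tau> \<le> fst p \<and> fst p < 0 \<and> snd p < 0}
       \<le> measure (prior mu1 mu2 s1 s2 r) {p. 2 * \<tau> < fst p \<and> fst p < \<tau> \<and> 0 < snd p}"
proof (cases "\<tau> = 0")
  case True
  then have empty: "{p. \<tau> \<le> fst p \<and> fst p < 0 \<and> snd p < (0::real)} = {}"
    by auto
  show ?thesis
    unfolding empty by simp
next
  case False
  interpret prob_space "prior mu1 mu2 s1 s2 r"
    using assms by (intro prob_space_prior) auto
  let ?P = "measure (prior mu1 mu2 s1 s2 r)"
  define S where "S = {p::real \<times> real. \<tau> < fst p \<and> fst p < 0 \<and> snd p < 0}"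
  have [measurable]: "S \<in> sets borel"
    unfolding S_def by measurable
  have t: "\<tau> = mu1 - mu2 * s1 / (r * s2)"
    using False \<tau> by (simp add: min_def split: if_splits)
  have "?P {p. \<tau> \<le> fst p \<and> fst p < 0 \<and> snd p < 0} \<le> ?P (S \<union> {p. fst p = \<tau>})"
    by (intro finite_measure_mono) (auto simp: S_def)
  also have "\<dots> \<le> ?P S + ?P {p. fst p = \<tau>}"
    by (intro measure_subadditive) auto
  also have "?P {p. fst p = \<tau>} = 0"
    using assms by (intro measure_prior_fst_eq) auto
  also have "?P S \<le> ?P {q. (2 * \<tau>, 0) - q \<in> S}"
    using assms(1-5) t by (rule measure_prior_le_reflect) (auto simp: S_def)
  also have "{q. (2 * \<tau>, 0) - q \<in> S} = {p. 2 * \<tau> < fst p \<and> fst p < \<tau> \<and> 0 < snd p}"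
    by (auto simp: S_def minus_prod_def)
  finally show ?thesis
    by simp
qed

lemma principal_value_approval_payoff:
  "principal_value approval_payoff m = (if 0 \<le> m 1 \<or> 0 \<le> m 2 then 1 else 0)"
proof -
  have "Pow {1::nat, 2} = {{}, {1}, {2}, {1, 2}}"
    by (auto simp: Pow_insert)
  then have "(\<lambda>S. approval_payoff S (approves S m)) ` Pow {1, 2} =
      {0, if 0 \<le> m 1 then 1 else 0, if 0 \<le> m 2 then 1 else 0, if 0 \<le> m 1 + m 2 then 1 else 0}"
    by (simp add: approval_payoff_def approves_def)
  then show ?thesis
    unfolding principal_value_def by (cases "0 \<le> m 1 \<or> 0 \<le> m 2") (auto intro!: Max_eqI)
qed

lemma posterior_mean_Disc1:
  assumes s1: "s1 > 0" and s2: "s2 > 0" and r: "\<bar>r\<bar> < 1"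
  shows "posterior_mean mu1 mu2 s1 s2 r Disc1 (x, y) =
    (\<lambda>i. if i = 1 then x else mu2 + r * s2 / s1 * (x - mu1))"
proof -
  define m where "m = mu2 + r * s2 / s1 * (x - mu1)"
  define c where "c = s2 * sqrt (1 - r\<^sup>2)"
  have c: "c > 0" using s2 r by (simp add: c_def abs_square_less_1)
  have "(\<integral>t. t * binorm_pdf mu1 mu2 s1 s2 r (x, t) \<partial>lborel)
      = (\<integral>t. normal_density mu1 s1 x * (normal_density m c t * t) \<partial>lborel)"
    by (simp add: binorm_pdf_factor[OF s1 s2 r] m_def c_def mult_ac)
  also have "\<dots> = normal_density mu1 s1 x * m"
    using c by (simp add: integral_normal_moment_nz_1)
  finally have "(\<integral>t. t * binorm_pdf mu1 mu2 s1 s2 r (x, t) \<partial>lborel)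
      = normal_density mu1 s1 x * m" .
  moreover have "(\<integral>t. binorm_pdf mu1 mu2 s1 s2 r (x, t) \<partial>lborel) = normal_density mu1 s1 x"
    using c by (simp add: binorm_pdf_factor[OF s1 s2 r] m_def[symmetric] c_def[symmetric])
  moreover have "normal_density mu1 s1 x > 0"
    using s1 by (rule normal_density_pos)
  ultimately show ?thesis
    unfolding posterior_mean_def Let_def by (auto simp: fun_eq_iff m_def)
qed

lemma principal_value_Disc1:
  assumes "s1 > 0" "s2 > 0" "0 < r" "r < 1"
  shows "principal_value approval_payoff (posterior_mean mu1 mu2 s1 s2 r Disc1 v)
       = indicator {p. min 0 (mu1 - mu2 * s1 / (r * s2)) \<le> fst p} v"
proof -
  obtain x y where v: "v = (x, y)"
    by fastforce
  have "0 \<le> mu2 + r * s2 / s1 * (x - mu1) \<longleftrightarrow> mu1 - mu2 * s1 / (r * s2) \<le> x"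
  proof -
    have "(mu2 + r * s2 / s1 * (x - mu1)) * (s1 / (r * s2)) = x - (mu1 - mu2 * s1 / (r * s2))"
      using assms by (simp add: field_simps)
    moreover have "0 < s1 / (r * s2)"
      using assms by simp
    ultimately show ?thesis
      by (metis diff_ge_0_iff_ge zero_le_mult_iff linorder_not_less order_less_imp_le)
  qed
  moreover have "\<bar>r\<bar> < 1"
    using assms by simp
  ultimately show ?thesis
    unfolding v using assms
    by (simp add: posterior_mean_Disc1 principal_value_approval_payoff indicator_def min_le_iff_disj)
qed

lemma principal_value_Disc2_swap:
  "principal_value approval_payoff (posterior_mean mu1 mu2 s1 s2 r Disc2 v)
     = principal_value approval_payoff (posterior_mean mu2 mu1 s2 s1 r Disc1 (prod.swap v))"
  by (cases v)
     (simp add: principal_value_approval_payoff posterior_mean_def Let_def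
        binorm_pdf_swap[of mu1 mu2] disj_commute)

lemma ex_ante_payoff_eq_measure:
  assumes "A \<in> sets borel"
    and "\<And>v. principal_value approval_payoff (posterior_mean mu1 mu2 s1 s2 r D v) = indicator A v"
  shows "ex_ante_payoff mu1 mu2 s1 s2 r D = measure (prior mu1 mu2 s1 s2 r) A"
  unfolding ex_ante_payoff_def assms(2) by simp

lemma ex_ante_payoff_DiscBoth:
  "ex_ante_payoff mu1 mu2 s1 s2 r DiscBoth
     = measure (prior mu1 mu2 s1 s2 r) {p. 0 \<le> fst p \<or> 0 \<le> snd p}"
  by (rule ex_ante_payoff_eq_measure)
     (auto simp: principal_value_approval_payoff posterior_mean_def split: split_indicator)

lemma ex_ante_payoff_DiscBoth_swap:
  "ex_ante_payoff mu1 mu2 s1 s2 r DiscBoth = ex_ante_payoff mu2 mu1 s2 s1 r DiscBoth"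
proof -
  have "{p::real \<times> real. 0 \<le> fst p \<or> 0 \<le> snd p} \<in> sets borel"
    by measurable
  then show ?thesis
    by (simp add: ex_ante_payoff_DiscBoth measure_prior_swap[of _ mu1 mu2] vimage_def disj_commute)
qed

lemma ex_ante_payoff_Disc1:
  assumes "s1 > 0" "s2 > 0" "0 < r" "r < 1"
  shows "ex_ante_payoff mu1 mu2 s1 s2 r Disc1
       = measure (prior mu1 mu2 s1 s2 r) {p. min 0 (mu1 - mu2 * s1 / (r * s2)) \<le> fst p}"
  by (rule ex_ante_payoff_eq_measure) (auto simp: principal_value_Disc1[OF assms])

lemma ex_ante_payoff_Disc2_swap:
  assumes "s1 > 0" "s2 > 0" "0 < r" "r < 1"
  shows "ex_ante_payoff mu1 mu2 s1 s2 r Disc2 = ex_ante_payoff mu2 mu1 s2 s1 r Disc1"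
proof -
  define A where "A = {p::real \<times> real. min 0 (mu2 - mu1 * s2 / (r * s1)) \<le> fst p}"
  have A[measurable]: "A \<in> sets borel"
    unfolding A_def by measurable
  have "ex_ante_payoff mu1 mu2 s1 s2 r Disc2 = measure (prior mu1 mu2 s1 s2 r) (prod.swap -` A)"
    using assms
    by (intro ex_ante_payoff_eq_measure)
       (auto simp: principal_value_Disc2_swap principal_value_Disc1 A_def split: split_indicator)
  also have "\<dots> = measure (prior mu2 mu1 s2 s1 r) A"
    by (subst measure_prior_swap) (auto simp: vimage_def)
  also have "\<dots> = ex_ante_payoff mu2 mu1 s2 s1 r Disc1"
    using assms by (simp add: ex_ante_payoff_Disc1 A_def)
  finally show ?thesis .
qed

lemma ex_ante_payoff_Disc1_std_normal:
  assumes "s1 > 0" "s2 > 0" "0 < r" "r < 1"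
  shows "ex_ante_payoff mu1 mu2 s1 s2 r Disc1
       = measure std_normal_distribution {min (- mu1 / s1) (- mu2 / (r * s2))..}"
proof -
  have "(min 0 (mu1 - mu2 * s1 / (r * s2)) - mu1) / s1 = min (- mu1 / s1) (- mu2 / (r * s2))"
    using assms by (simp add: min_diff_distrib_left min_divide_distrib_right field_simps)
  then show ?thesis
    using assms by (simp add: ex_ante_payoff_Disc1 measure_prior_fst_ge)
qed

lemma ex_ante_payoff_Disc2_less_Disc1:
  assumes "s1 > 0" "s2 > 0" "0 < r" "r < 1" "mu1 < 0" "mu2 < 0"
    and "s1 / mu1 < s2 / mu2"
  shows "ex_ante_payoff mu1 mu2 s1 s2 r Disc2 < ex_ante_payoff mu1 mu2 s1 s2 r Disc1"
proof -
  define a where "a = - mu1 / s1"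
  define b where "b = - mu2 / s2"
  have "0 < a" "0 < b"
    using assms by (simp_all add: a_def b_def divide_neg_pos)
  have "a < b"
  proof -
    have "inverse b < inverse a"
      using assms by (simp add: a_def b_def)
    then show ?thesis
      using \<open>0 < a\<close> \<open>0 < b\<close> by simp
  qed
  moreover have "a < a / r"
    using \<open>0 < a\<close> assms by (simp add: less_divide_eq)
  ultimately have "min a (b / r) < min b (a / r)"
    by (simp add: min_def)
  moreover have "ex_ante_payoff mu1 mu2 s1 s2 r Disc1 = measure std_normal_distribution {min a (b / r)..}"
    using assms by (simp add: ex_ante_payoff_Disc1_std_normal a_def b_def mult.commute[of r])
  moreover have "ex_ante_payoff mu1 mu2 s1 s2 r Disc2 = measure std_normal_distribution {min b (a / r)..}"
    using assms
    by (simp add: ex_ante_payoff_Disc2_swap ex_ante_payoff_Disc1_std_normal a_def b_def mult.commute[of r])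
  ultimately show ?thesis
    by (simp add: std_normal_tail_strict_antimono)
qed

lemma ex_ante_payoff_Disc1_less_DiscBoth:
  assumes "s1 > 0" "s2 > 0" "0 < r" "r < 1" "mu2 < 0"
  shows "ex_ante_payoff mu1 mu2 s1 s2 r Disc1 < ex_ante_payoff mu1 mu2 s1 s2 r DiscBoth"
proof -
  interpret prob_space "prior mu1 mu2 s1 s2 r"
    using assms by (intro prob_space_prior) auto
  let ?P = "measure (prior mu1 mu2 s1 s2 r)"
  define \<tau> where "\<tau> = min 0 (mu1 - mu2 * s1 / (r * s2))"
  define win1 where "win1 = {p::real \<times> real. \<tau> \<le> fst p}"
  define win_both where "win_both = {p::real \<times> real. 0 \<le> fst p \<or> 0 \<le> snd p}"
  define reflected_loss
    where "reflected_loss = {p::real \<times> real. 2 * \<tau> < fst p \<and> fst p < \<tau> \<and> 0 < snd p}"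
  define box where "box = {2 * \<tau> - 1<..<2 * \<tau>} \<times> {0::real<..<1::real}"
  have win_meas[measurable]: "win1 \<in> sets borel" "win_both \<in> sets borel"
    and [measurable]: "reflected_loss \<in> sets borel"
    unfolding win1_def win_both_def reflected_loss_def by measurable
  have [measurable]: "box \<in> sets borel"
    unfolding box_def by (intro borel_open open_Times) auto
  have "reflected_loss \<inter> box = {}"
    by (auto simp: reflected_loss_def box_def)
  have "\<tau> \<le> 0"
    by (simp add: \<tau>_def)
  have "win1 - win_both = {p. \<tau> \<le> fst p \<and> fst p < 0 \<and> snd p < 0}"
    by (auto simp: win1_def win_both_def)
  then have "?P (win1 - win_both) \<le> ?P reflected_loss"
    using measure_prior_lower_strip_le_upper_strip[OF assms \<tau>_def]
    by (simp add: reflected_loss_def)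
  also have "\<dots> < ?P reflected_loss + ?P box"
    using assms by (simp add: box_def measure_prior_box_pos)
  also have "\<dots> = ?P (reflected_loss \<union> box)"
    using \<open>reflected_loss \<inter> box = {}\<close> by (intro finite_measure_Union[symmetric]) auto
  also have "\<dots> \<le> ?P (win_both - win1)"
  proof (intro finite_measure_mono)
    show "reflected_loss \<union> box \<subseteq> win_both - win1"
      using \<open>\<tau> \<le> 0\<close> by (auto simp: reflected_loss_def box_def win_both_def win1_def)
  qed simp
  finally have "?P win1 < ?P win_both"
    by (rule finite_measure_less_of_Diff) (simp_all add: win_meas)
  then show ?thesis
    using assms
    by (simp add: ex_ante_payoff_Disc1 ex_ante_payoff_DiscBoth win1_def win_both_def \<tau>_def)
qed

theorem proposition3:
  fixes mu1 mu2 s1 s2 r :: real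
  assumes "s1 > 0" and "s2 > 0" and "0 < r" and "r < 1"
    and "mu1 < mu2" and "mu2 < 0"
  shows "(s1 / mu1 < s2 / mu2 \<longrightarrow> better mu1 mu2 s1 s2 r Disc1 Disc2)
       \<and> (s2 / mu2 < s1 / mu1 \<longrightarrow> better mu1 mu2 s1 s2 r Disc2 Disc1)
       \<and> better mu1 mu2 s1 s2 r DiscBoth Disc1
       \<and> better mu1 mu2 s1 s2 r DiscBoth Disc2"
proof -
  have "mu1 < 0"
    using assms by linarith
  have swap: "ex_ante_payoff mu1 mu2 s1 s2 r Disc2 = ex_ante_payoff mu2 mu1 s2 s1 r Disc1"
    "ex_ante_payoff mu2 mu1 s2 s1 r Disc2 = ex_ante_payoff mu1 mu2 s1 s2 r Disc1"
    "ex_ante_payoff mu2 mu1 s2 s1 r DiscBoth = ex_ante_payoff mu1 mu2 s1 s2 r DiscBoth"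
    using assms by (simp_all add: ex_ante_payoff_Disc2_swap ex_ante_payoff_DiscBoth_swap[of mu2 mu1])
  have "better mu1 mu2 s1 s2 r Disc1 Disc2" if "s1 / mu1 < s2 / mu2"
    using ex_ante_payoff_Disc2_less_Disc1[OF assms(1-4) \<open>mu1 < 0\<close> assms(6) that]
    by (simp add: better_def)
  moreover have "better mu1 mu2 s1 s2 r Disc2 Disc1" if "s2 / mu2 < s1 / mu1"
    using ex_ante_payoff_Disc2_less_Disc1[OF assms(2,1,3,4,6) \<open>mu1 < 0\<close> that]
    by (simp add: better_def swap)
  moreover have "better mu1 mu2 s1 s2 r DiscBoth Disc1"
    using ex_ante_payoff_Disc1_less_DiscBoth[OF assms(1-4,6)]
    by (simp add: better_def)
  moreover have "better mu1 mu2 s1 s2 r DiscBoth Disc2"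
    using ex_ante_payoff_Disc1_less_DiscBoth[of s2 s1 r mu1 mu2, OF assms(2,1,3,4) \<open>mu1 < 0\<close>]
    by (simp add: better_def swap)
  ultimately show ?thesis
    by blast
qed

end
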